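(* In the setting of short geodesics, there is $\varepsilon>0$ such that for every $0<s<\varepsilon$ the following holds for $\gamma_s(t)=(x(t),y(t),\xi(t),\eta(t))$: - $\dot\xi(t)<0$ for $t\in(0,\tau(0,y,\sigma_s))$; - $x(t)\le Cs$ for all $t\in[0,\tau(0,y,\sigma_s)]$, where the constant $C$ is uniform in $t$ and depends only on the metric $h$.
   Context: Gas giant setting. $M$ is a compact manifold with boundary, $\dim M=n\ge 2$, and $g=\rho^{-1}\bar g$ with $\bar g$ smooth up to the boundary and $\rho$ a boundary defining function. Near $\partial M$ there are coordinates $(x,y)$ in which $g=\mathrm{d}x^2+x^{-2}h(x,y,\mathrm{d}y)$, with $h_x$ a family of metrics on $\partial M$ smooth in $x$ up to $x=0$. Dual coordinates are $(\xi,\eta)$. Geodesic flow. $\phi_t$ is the Hamiltonian flow of $H=\tfrac12\xi^2+\tfrac12x^2h^{ij}\eta_i\eta_j$: - $\dot x=\xi$, - $\dot y^i=x^2h^{ij}\eta_j$, - $\dot\xi=-xh^{ij}\eta_i\eta_j-\tfrac12x^2\partial_xh^{ij}\eta_i\eta_j$, - $\dot\eta_i=-\tfrac12x^2\partial_{y^i}h^{kj}\eta_k\eta_j$. Short geodesics. Fix $y\in\partial M$ and $\eta\in T^*_y\partial M$ with $h^{ij}(0,y)\eta_i\eta_j=1$. For $s>0$ let $\sigma_s=(s,\eta)$, i.e. $\xi=s$, and $\gamma_s(t)=\phi_t(0,y,\sigma_s)$. Here $\tau(0,y,\sigma_s)$ is the first positive time at which $x$ returns to $0$. *)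

theory Defs
  imports "HOL-Analysis.Analysis"
begin

fun iter_dd :: "('a::real_normed_vector \<Rightarrow> 'b::real_normed_vector) \<Rightarrow> 'a list \<Rightarrow> 'a \<Rightarrow> 'b" where
  "iter_dd f [] = f"
| "iter_dd f (v # vs) = (\<lambda>p. frechet_derivative (iter_dd f vs) (at p) v)"

definition smooth_on :: "('a::real_normed_vector \<Rightarrow> 'b::real_normed_vector) \<Rightarrow> 'a set \<Rightarrow> bool" where
  "smooth_on f W \<longleftrightarrow> open W \<and> (\<forall>vs. iter_dd f vs differentiable_on W)"

text \<open>Boundary coordinates y live in real^'m (so dim M = CARD('m) + 1 \<ge> 2).
 h (x,y) is the metric h_x at y; hinv is the dual metric h^{ij}.\<close>

definition hinv :: "(real \<times> (real^'m) \<Rightarrow> real^'m^'m) \<Rightarrow> real \<times> (real^'m) \<Rightarrow> real^'m^'m" where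
  "hinv h p = matrix_inv (h p)"

definition metric_family_on :: "(real \<times> (real^'m) \<Rightarrow> real^'m^'m) \<Rightarrow> (real \<times> (real^'m)) set \<Rightarrow> bool" where
  "metric_family_on h W \<longleftrightarrow> smooth_on h W \<and>
     (\<forall>p\<in>W. transpose (h p) = h p \<and> (\<forall>v. v \<noteq> 0 \<longrightarrow> v \<bullet> (h p *v v) > 0))"

definition dx_hinv :: "(real \<times> (real^'m) \<Rightarrow> real^'m^'m) \<Rightarrow> real \<times> (real^'m) \<Rightarrow> real^'m^'m" where
  "dx_hinv h p = frechet_derivative (hinv h) (at p) (1, 0)"

definition dy_hinv :: "(real \<times> (real^'m) \<Rightarrow> real^'m^'m) \<Rightarrow> 'm \<Rightarrow> real \<times> (real^'m) \<Rightarrow> real^'m^'m" where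
  "dy_hinv h i p = frechet_derivative (hinv h) (at p) (0, axis i 1)"

text \<open>(x,y,xi,eta) solves Hamilton's equations for H = xi^2/2 + x^2 h^{ij} eta_i eta_j / 2
 on [0,T], staying in W, starting at (0,y0,s,eta0); T = tau is the first positive
 time at which x returns to 0.\<close>
definition short_geodesic ::
  "(real \<times> (real^'m) \<Rightarrow> real^'m^'m) \<Rightarrow> (real \<times> (real^'m)) set \<Rightarrow> real^'m \<Rightarrow> real^'m \<Rightarrow> real \<Rightarrow>
   (real \<Rightarrow> real) \<Rightarrow> (real \<Rightarrow> real^'m) \<Rightarrow> (real \<Rightarrow> real) \<Rightarrow> (real \<Rightarrow> real^'m) \<Rightarrow> real \<Rightarrow> bool" where
  "short_geodesic h W y0 eta0 s x y xi eta T \<longleftrightarrow>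
     0 < T \<and> x 0 = 0 \<and> y 0 = y0 \<and> xi 0 = s \<and> eta 0 = eta0 \<and>
     x T = 0 \<and> (\<forall>t\<in>{0<..<T}. x t \<noteq> 0) \<and>
     (\<forall>t\<in>{0..T}. (x t, y t) \<in> W \<and>
        (x has_real_derivative xi t) (at t within {0..T}) \<and>
        (y has_vector_derivative ((x t)\<^sup>2 *\<^sub>R (hinv h (x t, y t) *v eta t))) (at t within {0..T}) \<and>
        (xi has_real_derivative
            (- x t * (eta t \<bullet> (hinv h (x t, y t) *v eta t))
             - (1/2) * (x t)\<^sup>2 * (eta t \<bullet> (dx_hinv h (x t, y t) *v eta t)))) (at t within {0..T}) \<and>
        (eta has_vector_derivative
            (\<chi> i. - (1/2) * (x t)\<^sup>2 * (eta t \<bullet> (dy_hinv h i (x t, y t) *v eta t)))) (at t within {0..T}))"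

end

(*
  Along a geodesic, xi' = - g x with g = h^{ij} eta_i eta_j + x (d_x h^{ij}) eta_i eta_j / 2,
  while y' and eta' are x^2 times bounded quantities. Near (x, y, eta) = (0, y0, eta0) one
  has 1/4 <= g <= 3, and as long as this holds x >= 0 makes xi decrease, the energy
  xi^2 + x^2/4 is nonincreasing while xi >= 0 and xi^2 + 3 x^2 while xi <= 0. Hence
  x <= 2 s and xi >= -4 s. Since x^2 <= 8 s g x = -8 s xi', the drift of y and eta is at
  most 8 s (s - xi) = O(s^2), so for small s a continuity argument keeps the geodesic in
  that neighbourhood up to its return time. The bounds on the derivatives of h^{-1} come
  from the derivative H |-> -A^{-1} H A^{-1} of matrix inversion, which is continuous by
  Cramer's rule.
*)

theory Submission
  imports Defs
begin

section \<open>Matrix inversion\<close>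

lemma bounded_bilinear_matrix_matrix_mult [bounded_bilinear]:
  "bounded_bilinear ((**) :: real^'n^'m \<Rightarrow> real^'p^'n \<Rightarrow> real^'p^'m)"
  unfolding bilinear_conv_bounded_bilinear[symmetric] bilinear_def
  by (auto intro!: linearI simp: vec_eq_iff matrix_matrix_mult_def sum.distrib
      sum_distrib_left algebra_simps)

lemma bounded_bilinear_matrix_vector_mult [bounded_bilinear]:
  "bounded_bilinear ((*v) :: real^'n^'m \<Rightarrow> real^'n \<Rightarrow> real^'m)"
  unfolding bilinear_conv_bounded_bilinear[symmetric] bilinear_def
  by (auto intro!: linearI simp: vec_eq_iff matrix_vector_mult_def sum.distrib
      sum_distrib_left algebra_simps)

lemma continuous_det [continuous_intros]:
  fixes f :: "'a::t2_space \<Rightarrow> real^'n^'n"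
  shows "continuous F f \<Longrightarrow> continuous F (\<lambda>x. det (f x))"
  unfolding det_def by (intro continuous_intros)

lemma continuous_on_det [continuous_intros]:
  fixes f :: "'a::topological_space \<Rightarrow> real^'n^'n"
  shows "continuous_on S f \<Longrightarrow> continuous_on S (\<lambda>x. det (f x))"
  unfolding det_def by (intro continuous_intros)

lemma continuous_vec_lambda [continuous_intros]:
  "(\<And>i. continuous F (f i)) \<Longrightarrow> continuous F (\<lambda>x. \<chi> i. f i x)"
  unfolding continuous_def by (rule tendsto_vec_lambda)

lemma positive_definite_imp_invertible:
  fixes A :: "real^'n^'n"
  assumes "\<And>v. v \<noteq> 0 \<Longrightarrow> 0 < v \<bullet> (A *v v)"
  shows "invertible A"
proof -
  have "\<forall>v. A *v v = 0 \<longrightarrow> v = 0"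
    using assms by force
  then show ?thesis
    by (simp add: invertible_left_inverse matrix_left_invertible_ker)
qed

lemma
  assumes "invertible (A :: 'a::semiring_1^'n^'n)"
  shows matrix_inv_left: "matrix_inv A ** A = mat 1"
    and matrix_inv_right: "A ** matrix_inv A = mat 1"
  using someI_ex[OF assms[unfolded invertible_def]] by (auto simp: matrix_inv_def)

lemma matrix_inv_cramer:
  fixes A :: "real^'n^'n"
  assumes "invertible A"
  shows "matrix_inv A = (\<chi> k j. det (\<chi> i l. if l = k then mat 1 $ i $ j else A $ i $ l) / det A)"
proof -
  define e :: "'n \<Rightarrow> real^'n" where "e j = (\<chi> i. mat 1 $ i $ j)" for j
  have "A *v (matrix_inv A *v e j) = e j" for j
    by (simp add: matrix_vector_mul_assoc matrix_inv_right[OF assms])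
  then have "matrix_inv A *v e j = (\<chi> k. det (\<chi> i l. if l = k then e j $ i else A $ i $ l) / det A)" for j
    using assms by (simp add: cramer invertible_det_nz)
  moreover have "(M *v e j) $ k = M $ k $ j" for M :: "real^'n^'n" and k j
    by (simp add: e_def matrix_vector_mult_def mat_def if_distrib cong: if_cong)
  ultimately show ?thesis
    by (simp add: vec_eq_iff e_def cong: if_cong)
qed

lemma eventually_nhds_invertible:
  fixes A :: "real^'n^'n"
  assumes "invertible A"
  shows "\<forall>\<^sub>F N in nhds A. invertible N"
proof -
  have "open {N :: real^'n^'n. det N \<noteq> 0}"
    by (intro open_Collect_neq continuous_intros)
  from eventually_nhds_in_open[OF this, of A] show ?thesis
    using assms by (simp add: invertible_det_nz)
qed

lemma isCont_matrix_inv: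
  fixes A :: "real^'n^'n"
  assumes "invertible A"
  shows "isCont matrix_inv A"
proof -
  have "\<forall>\<^sub>F N in nhds A. matrix_inv N =
      (\<chi> k j. det (\<chi> i l. if l = k then mat 1 $ i $ j else N $ i $ l) / det N)"
    using eventually_nhds_invertible[OF assms] by eventually_elim (rule matrix_inv_cramer)
  moreover have "isCont (\<lambda>N :: real^'n^'n. if l = k then mat 1 $ i $ j else N $ i $ l) A"
    for i j k l
    by (cases "l = k") (auto intro!: continuous_intros)
  ultimately show ?thesis
    using assms by (subst isCont_cong) (auto simp: invertible_det_nz intro!: continuous_intros)
qed

lemma has_derivative_matrix_inv:
  fixes A :: "real^'n^'n"
  assumes "invertible A"
  shows "(matrix_inv has_derivative (\<lambda>H. - (matrix_inv A ** H ** matrix_inv A))) (at A)"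
proof -
  interpret mm: bounded_bilinear "(**) :: real^'n^'n \<Rightarrow> real^'n^'n \<Rightarrow> real^'n^'n"
    by (rule bounded_bilinear_matrix_matrix_mult)
  obtain K where K: "\<And>X Y. norm ((X :: real^'n^'n) ** (Y :: real^'n^'n)) \<le> norm X * norm Y * K" "0 < K"
    using mm.pos_bounded by blast
  define P where "P = matrix_inv A"
  define R where "R N = matrix_inv N - P - - (P ** (N - A) ** P)" for N
  \<comment> \<open>From \<open>N\<inverse> - A\<inverse> = - N\<inverse> (N - A) A\<inverse>\<close>: the remainder carries the factor
    \<open>N\<inverse> - A\<inverse> \<longrightarrow> 0\<close>.\<close>
  have R_eq: "R N = - ((matrix_inv N - P) ** (N - A) ** P)" if "invertible N" for N
  proof -
    have "matrix_inv N ** (N - A) ** P = P - matrix_inv N"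
      using matrix_inv_left[OF that] matrix_inv_right[OF assms]
      by (simp add: P_def mm.diff_left mm.diff_right flip: matrix_mul_assoc)
    then show ?thesis
      by (simp add: R_def mm.diff_left algebra_simps)
  qed
  have R_bound: "norm (R N) / norm (N - A) \<le> K * K * norm P * norm (matrix_inv N - P)"
    if "invertible N" "N \<noteq> A" for N
  proof -
    have "norm (R N) \<le> norm ((matrix_inv N - P) ** (N - A)) * norm P * K"
      unfolding R_eq[OF that(1)] norm_minus_cancel by (rule K(1))
    also have "\<dots> \<le> norm (matrix_inv N - P) * norm (N - A) * K * norm P * K"
      using K by (intro mult_right_mono) auto
    finally show ?thesis
      using that(2) by (simp add: divide_le_eq algebra_simps)
  qed
  have "((\<lambda>N. K * K * norm P * norm (matrix_inv N - P)) \<longlongrightarrow> K * K * norm P * norm (P - P)) (at A)"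
    using isCont_matrix_inv[OF assms] unfolding isCont_def P_def by (intro tendsto_intros)
  then have "((\<lambda>N. K * K * norm P * norm (matrix_inv N - P)) \<longlongrightarrow> 0) (at A)"
    by simp
  moreover have "\<forall>\<^sub>F N in at A. norm (norm (R N) / norm (N - A)) \<le> K * K * norm P * norm (matrix_inv N - P)"
    using eventually_nhds_invertible[OF assms] unfolding eventually_at_filter
    by eventually_elim (simp add: R_bound)
  ultimately have "((\<lambda>N. norm (R N) / norm (N - A)) \<longlongrightarrow> 0) (at A)"
    by (rule Lim_null_comparison[rotated])
  moreover have "bounded_linear (\<lambda>H. - (P ** H ** P))"
    by (intro bounded_linear_minus bounded_linear_compose[OF mm.bounded_linear_left mm.bounded_linear_right])
  ultimately show ?thesis
    unfolding has_derivative_iff_norm P_def[symmetric] R_def by simp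
qed

section \<open>The inverse metric near the boundary\<close>

lemma smooth_on_has_derivative:
  assumes "smooth_on f W" "p \<in> W"
  shows "(f has_derivative frechet_derivative f (at p)) (at p)"
proof -
  have "iter_dd f [] differentiable_on W" and W: "open W"
    using assms(1) unfolding smooth_on_def by blast+
  then have "f differentiable (at p within W)"
    using assms(2) by (simp add: differentiable_on_def)
  then show ?thesis
    by (simp add: at_within_open[OF assms(2) W] frechet_derivative_works)
qed

lemma smooth_on_isCont_frechet_derivative:
  assumes "smooth_on f W" "p \<in> W"
  shows "isCont (\<lambda>q. frechet_derivative f (at q) v) p"
proof -
  have "iter_dd f [v] differentiable_on W" "open W"
    using assms(1) unfolding smooth_on_def by blast+
  then have "continuous_on W (\<lambda>q. frechet_derivative f (at q) v)" "open W"
    by (simp_all add: differentiable_imp_continuous_on)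
  then show ?thesis
    using assms(2) continuous_on_eq_continuous_at by blast
qed

lemma metric_family_on_open: "metric_family_on h W \<Longrightarrow> open W"
  by (simp add: metric_family_on_def smooth_on_def)

lemma metric_family_on_invertible:
  assumes "metric_family_on h W" "p \<in> W"
  shows "invertible (h p)"
  using assms by (intro positive_definite_imp_invertible) (auto simp: metric_family_on_def)

lemma has_derivative_hinv:
  assumes "metric_family_on h W" "p \<in> W"
  shows "(hinv h has_derivative (\<lambda>v. - (hinv h p ** frechet_derivative h (at p) v ** hinv h p))) (at p)"
proof -
  have "(h has_derivative frechet_derivative h (at p)) (at p)"
    using assms by (intro smooth_on_has_derivative) (auto simp: metric_family_on_def)
  from has_derivative_compose[OF this has_derivative_matrix_inv[OF metric_family_on_invertible[OF assms]]]
  show ?thesis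
    by (simp add: hinv_def[abs_def])
qed

lemma isCont_hinv:
  assumes "metric_family_on h W" "p \<in> W"
  shows "isCont (hinv h) p"
  using has_derivative_continuous[OF has_derivative_hinv[OF assms]] .

lemma isCont_frechet_derivative_hinv:
  assumes "metric_family_on h W" "p \<in> W"
  shows "isCont (\<lambda>q. frechet_derivative (hinv h) (at q) v) p"
proof -
  have smooth: "smooth_on h W" and "open W"
    using assms(1) metric_family_on_open by (auto simp: metric_family_on_def)
  have "\<forall>\<^sub>F q in nhds p. frechet_derivative (hinv h) (at q) v
      = - (hinv h q ** frechet_derivative h (at q) v ** hinv h q)"
    using eventually_nhds_in_open[OF \<open>open W\<close> assms(2)]
    by eventually_elim (simp add: frechet_derivative_at[OF has_derivative_hinv[OF assms(1)], symmetric])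
  moreover have "isCont (\<lambda>q. - (hinv h q ** frechet_derivative h (at q) v ** hinv h q)) p"
    using isCont_hinv[OF assms] smooth_on_isCont_frechet_derivative[OF smooth assms(2)]
    by (intro continuous_intros)
  ultimately show ?thesis
    by (subst isCont_cong)
qed

lemma isCont_eventually_dist_less:
  fixes f :: "'a::metric_space \<Rightarrow> 'b::metric_space"
  assumes "isCont f a" "0 < e"
  shows "\<forall>\<^sub>F z in nhds a. dist (f z) (f a) < e"
  using assms(1)[unfolded continuous_at_eps_delta] assms(2) unfolding eventually_nhds_metric by blast

lemma metric_coefficients_locally_bounded:
  fixes h :: "real \<times> (real^'m) \<Rightarrow> real^'m^'m"
  assumes mf: "metric_family_on h W" and p0: "p0 \<in> W"
    and unit: "eta0 \<bullet> (hinv h p0 *v eta0) = 1"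
  shows "\<exists>B>0. \<forall>\<^sub>F (p, \<eta>) in nhds (p0, eta0). p \<in> W \<and>
    1/2 \<le> \<eta> \<bullet> (hinv h p *v \<eta>) \<and> \<eta> \<bullet> (hinv h p *v \<eta>) \<le> 2 \<and>
    \<bar>\<eta> \<bullet> (dx_hinv h p *v \<eta>)\<bar> \<le> B \<and> norm (hinv h p *v \<eta>) \<le> B \<and>
    norm (\<chi> i. \<eta> \<bullet> (dy_hinv h i p *v \<eta>)) \<le> B"
proof -
  define z0 where "z0 = (p0, eta0)"
  define Q where "Q z = snd z \<bullet> (hinv h (fst z) *v snd z)" for z :: "(real \<times> (real^'m)) \<times> (real^'m)"
  define Dx where "Dx z = snd z \<bullet> (dx_hinv h (fst z) *v snd z)" for z :: "(real \<times> (real^'m)) \<times> (real^'m)"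
  define V where "V z = hinv h (fst z) *v snd z" for z :: "(real \<times> (real^'m)) \<times> (real^'m)"
  define Dy where "Dy z = (\<chi> i. snd z \<bullet> (dy_hinv h i (fst z) *v snd z))"
    for z :: "(real \<times> (real^'m)) \<times> (real^'m)"
  define B where "B = norm (Dx z0) + norm (V z0) + norm (Dy z0) + 1"
  have at_fst: "isCont (\<lambda>z. F (fst z)) z0" if "isCont F p0" for F :: "real \<times> (real^'m) \<Rightarrow> real^'m^'m"
    by (rule isCont_o2[OF continuous_fst[OF continuous_ident]]) (simp add: that z0_def)
  have hinv: "isCont (\<lambda>z. hinv h (fst z)) z0"
    and dx: "isCont (\<lambda>z. dx_hinv h (fst z)) z0"
    and dy: "\<And>i. isCont (\<lambda>z. dy_hinv h i (fst z)) z0"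
    unfolding dx_hinv_def dy_hinv_def
    by (intro at_fst isCont_hinv[OF mf p0] isCont_frechet_derivative_hinv[OF mf p0])+
  have "isCont Q z0" "isCont Dx z0" "isCont V z0" "isCont Dy z0"
    unfolding Q_def Dx_def V_def Dy_def by (intro continuous_intros hinv dx dy)+
  then have "\<forall>\<^sub>F z in nhds z0. dist (Q z) (Q z0) < 1/2 \<and> dist (Dx z) (Dx z0) < 1 \<and>
      dist (V z) (V z0) < 1 \<and> dist (Dy z) (Dy z0) < 1"
    by (intro eventually_conj isCont_eventually_dist_less) auto
  moreover have "\<forall>\<^sub>F z in nhds z0. z \<in> W \<times> UNIV"
    using mf p0 by (intro eventually_nhds_in_open) (auto simp: z0_def metric_family_on_open open_Times)
  ultimately have "\<forall>\<^sub>F z in nhds z0. fst z \<in> W \<and> 1/2 \<le> Q z \<and> Q z \<le> 2 \<and>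
      norm (Dx z) \<le> B \<and> norm (V z) \<le> B \<and> norm (Dy z) \<le> B"
  proof eventually_elim
    case (elim z)
    have "Q z0 = 1"
      using unit by (simp add: Q_def z0_def)
    moreover have "norm (Dx z) \<le> norm (Dx z0) + 1" "norm (V z) \<le> norm (V z0) + 1"
      "norm (Dy z) \<le> norm (Dy z0) + 1"
      using elim norm_triangle_sub[of "Dx z" "Dx z0"] norm_triangle_sub[of "V z" "V z0"]
        norm_triangle_sub[of "Dy z" "Dy z0"] by (simp_all add: dist_norm)
    moreover have "\<bar>Q z - Q z0\<bar> < 1/2" "fst z \<in> W"
      using elim by (auto simp: dist_real_def mem_Times_iff)
    moreover have "0 \<le> norm (Dx z0)" "0 \<le> norm (V z0)" "0 \<le> norm (Dy z0)"
      by simp_all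
    ultimately show ?case
      unfolding B_def abs_less_iff by linarith
  qed
  moreover have "0 < B"
    unfolding B_def by (simp add: add_nonneg_pos)
  ultimately show ?thesis
    unfolding z0_def Q_def Dx_def V_def Dy_def case_prod_beta real_norm_def by blast
qed

section \<open>Radial motion\<close>

lemma DERIV_nonpos_imp_le_Icc:
  fixes f f' :: "real \<Rightarrow> real"
  assumes "l \<le> a" "a \<le> b" "b \<le> u" "continuous_on {l..u} f"
    and "\<And>t. l < t \<Longrightarrow> t < u \<Longrightarrow> (f has_real_derivative f' t) (at t)"
    and "\<And>t. a < t \<Longrightarrow> t < b \<Longrightarrow> f' t \<le> 0"
  shows "f b \<le> f a"
proof (rule DERIV_nonpos_imp_decreasing_open[OF assms(2)])
  show "continuous_on {a..b} f"
    using assms(4) by (rule continuous_on_subset) (use assms(1,3) in auto)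
  show "\<exists>y. (f has_real_derivative y) (at t) \<and> y \<le> 0" if "a < t" "t < b" for t
    using assms that by force
qed

lemma pos_on_Ioo_if_nonvanishing:
  fixes f :: "real \<Rightarrow> real"
  assumes cont: "continuous_on {a..b} f" and "f a = 0" "a < b"
    and deriv: "(f has_real_derivative d) (at a within {a..b})" "0 < d"
    and nonzero: "\<And>t. a < t \<Longrightarrow> t < b \<Longrightarrow> f t \<noteq> 0"
    and t: "a < t" "t < b"
  shows "0 < f t"
proof (rule ccontr)
  assume "\<not> 0 < f t"
  then have neg: "f t \<le> 0"
    by simp
  obtain e where e: "0 < e" "\<And>k. 0 < k \<Longrightarrow> a + k \<in> {a..b} \<Longrightarrow> k < e \<Longrightarrow> f a < f (a + k)"
    using has_real_derivative_pos_inc_right[OF deriv] by blast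
  define k where "k = min (e/2) ((b - a)/2)"
  have k: "0 < k" "k < e" "a + k < b"
    using e(1) \<open>a < b\<close> by (auto simp: k_def min_def field_simps)
  define c where "c = a + k"
  have c: "a < c" "c < b" "0 < f c"
    using k e(2)[of k] \<open>f a = 0\<close> unfolding c_def by auto
  have "connected (f ` {a<..<b})"
    by (intro connected_continuous_image continuous_on_subset[OF cont]) auto
  then have "0 \<in> f ` {a<..<b}"
    by (rule connectedD_interval) (use c t neg in auto)
  then show False
    using nonzero by auto
qed

lemma bootstrap_Icc:
  fixes \<phi> :: "real \<Rightarrow> real"
  assumes cont: "continuous_on {a..b} \<phi>"
    and step: "\<And>t. a \<le> t \<Longrightarrow> t \<le> b \<Longrightarrow>
      (\<And>\<tau>. a \<le> \<tau> \<Longrightarrow> \<tau> < t \<Longrightarrow> \<phi> \<tau> < r) \<Longrightarrow> \<phi> t < r"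
    and t: "a \<le> t" "t \<le> b"
  shows "\<phi> t < r"
proof (rule ccontr)
  define S where "S = {a..b} \<inter> \<phi> -` {r..}"
  assume "\<not> \<phi> t < r"
  then have "S \<noteq> {}"
    using t by (auto simp: S_def)
  moreover have "bdd_below S" "closed S"
    unfolding S_def using cont by (auto intro: continuous_closed_preimage)
  ultimately have first: "Inf S \<in> S"
    by (rule closed_contains_Inf)
  have "\<phi> \<tau> < r" if "a \<le> \<tau>" "\<tau> < Inf S" for \<tau>
  proof (rule ccontr)
    assume "\<not> \<phi> \<tau> < r"
    then have "\<tau> \<in> S"
      using that first by (auto simp: S_def)
    then show False
      using cInf_lower[OF _ \<open>bdd_below S\<close>] that(2) by fastforce
  qed
  then have "\<phi> (Inf S) < r"
    using step first by (auto simp: S_def)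
  then show False
    using first by (auto simp: S_def)
qed

locale radial_motion =
  fixes T s :: real and x xi g :: "real \<Rightarrow> real"
  assumes s_pos: "0 < s" and x_0: "x 0 = 0" and xi_0: "xi 0 = s"
    and continuous_on_x: "continuous_on {0..T} x"
    and continuous_on_xi: "continuous_on {0..T} xi"
    and x_deriv: "\<And>t. 0 < t \<Longrightarrow> t < T \<Longrightarrow> (x has_real_derivative xi t) (at t)"
    and xi_deriv: "\<And>t. 0 < t \<Longrightarrow> t < T \<Longrightarrow> (xi has_real_derivative - g t * x t) (at t)"
    and x_nonneg: "\<And>t. 0 \<le> t \<Longrightarrow> t \<le> T \<Longrightarrow> 0 \<le> x t"
begin

lemma xi_antimono:
  assumes "0 \<le> a" "a \<le> b" "b \<le> T" and g_nonneg: "\<And>t. a < t \<Longrightarrow> t < b \<Longrightarrow> 0 \<le> g t"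
  shows "xi b \<le> xi a"
proof (rule DERIV_nonpos_imp_le_Icc[OF _ assms(2) _ continuous_on_xi xi_deriv])
  show "- g t * x t \<le> 0" if "a < t" "t < b" for t
    using g_nonneg[OF that] x_nonneg[of t] that assms by simp
qed (use assms in auto)

definition energy :: "real \<Rightarrow> real \<Rightarrow> real" where
  "energy k t = (xi t)\<^sup>2 + k * (x t)\<^sup>2"

lemma continuous_on_energy: "continuous_on {0..T} (energy k)"
  unfolding energy_def[abs_def] by (intro continuous_intros continuous_on_x continuous_on_xi)

lemma energy_deriv:
  assumes "0 < t" "t < T"
  shows "(energy k has_real_derivative 2 * (x t * xi t) * (k - g t)) (at t)"
proof -
  have "(energy k has_real_derivative 2 * xi t * (- g t * x t) + k * (2 * x t * xi t)) (at t)"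
    unfolding energy_def[abs_def] using x_deriv[OF assms] xi_deriv[OF assms]
    by (auto intro!: derivative_eq_intros)
  moreover have "2 * xi t * (- g t * x t) + k * (2 * x t * xi t) = 2 * (x t * xi t) * (k - g t)"
    by (simp add: algebra_simps)
  ultimately show ?thesis
    by simp
qed

text \<open>By \<open>energy_deriv\<close>, \<open>energy k\<close> is nonincreasing while \<open>\<xi> \<ge> 0\<close> if \<open>k \<le> g\<close>, and while
  \<open>\<xi> \<le> 0\<close> if \<open>g \<le> k\<close>; the weights \<open>1/4\<close> and \<open>3\<close> are the bounds on \<open>g\<close>.\<close>

context
  fixes t1 :: real
  assumes t1: "0 \<le> t1" "t1 \<le> T"
    and g_bounds: "\<And>t. 0 < t \<Longrightarrow> t < t1 \<Longrightarrow> 1/4 \<le> g t \<and> g t \<le> 3"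
begin

lemma xi_antimono_before:
  assumes "0 \<le> a" "a \<le> b" "b \<le> t1"
  shows "xi b \<le> xi a"
proof (rule xi_antimono)
  show "0 \<le> g t" if "a < t" "t < b" for t
    using g_bounds[of t] that assms by auto
qed (use assms t1 in auto)

lemma x_le_if_xi_nonneg:
  assumes c: "0 \<le> c" "c \<le> t1" and "0 \<le> xi c"
  shows "x c \<le> 2 * s"
proof -
  have "energy (1/4) c \<le> energy (1/4) 0"
  proof (rule DERIV_nonpos_imp_le_Icc[OF _ _ _ continuous_on_energy energy_deriv])
    show "2 * (x t * xi t) * (1/4 - g t) \<le> 0" if "0 < t" "t < c" for t
    proof -
      have "0 \<le> xi t" "0 \<le> x t" "1/4 \<le> g t"
        using assms that xi_antimono_before[of t c] x_nonneg[of t] g_bounds[of t] t1 by auto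
      then have "0 \<le> 2 * (x t * xi t)" "1/4 - g t \<le> 0"
        by simp_all
      then show ?thesis
        by (rule mult_nonneg_nonpos)
    qed
  qed (use c t1 in simp_all)
  then have "(xi c)\<^sup>2 + 1/4 * (x c)\<^sup>2 \<le> s\<^sup>2"
    using x_0 xi_0 by (simp add: energy_def)
  moreover have "(2 * s)\<^sup>2 = 4 * s\<^sup>2"
    by (simp add: power_mult_distrib)
  ultimately have "(x c)\<^sup>2 \<le> (2 * s)\<^sup>2"
    using zero_le_power2[of "xi c"] by linarith
  then show ?thesis
    using s_pos power2_le_imp_le[of "x c" "2 * s"] by simp
qed

lemma xi_vanishes_before:
  assumes c: "0 \<le> c" "c \<le> t1" and "xi c < 0"
  obtains c0 where "0 \<le> c0" "c0 \<le> c" "xi c0 = 0" "\<And>t. c0 \<le> t \<Longrightarrow> t \<le> c \<Longrightarrow> xi t \<le> 0"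
proof -
  obtain c0 where c0: "0 \<le> c0" "c0 \<le> c" "xi c0 = 0"
    using IVT2'[of xi c 0 0] assms xi_0 s_pos t1 continuous_on_xi
    by (force intro: continuous_on_subset)
  moreover have "xi t \<le> 0" if "c0 \<le> t" "t \<le> c" for t
    using xi_antimono_before[of c0 t] c0 that c by simp
  ultimately show thesis
    by (rule that)
qed

lemma x_le:
  assumes c: "0 \<le> c" "c \<le> t1"
  shows "x c \<le> 2 * s"
proof (cases "0 \<le> xi c")
  case True
  then show ?thesis
    using x_le_if_xi_nonneg c by blast
next
  case False
  then have "xi c < 0"
    by simp
  then obtain c0 where c0: "0 \<le> c0" "c0 \<le> c" "xi c0 = 0" "\<And>t. c0 \<le> t \<Longrightarrow> t \<le> c \<Longrightarrow> xi t \<le> 0"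
    using xi_vanishes_before[OF c] by blast
  have "x c \<le> x c0"
    using c0 c t1 by (intro DERIV_nonpos_imp_le_Icc[OF _ _ _ continuous_on_x x_deriv]) auto
  also have "\<dots> \<le> 2 * s"
    using c0 c by (intro x_le_if_xi_nonneg) auto
  finally show ?thesis .
qed

lemma xi_ge:
  assumes c: "0 \<le> c" "c \<le> t1"
  shows "- 4 * s \<le> xi c"
proof (cases "0 \<le> xi c")
  case True
  then show ?thesis
    using s_pos by simp
next
  case False
  then have "xi c < 0"
    by simp
  then obtain c0 where c0: "0 \<le> c0" "c0 \<le> c" "xi c0 = 0" "\<And>t. c0 \<le> t \<Longrightarrow> t \<le> c \<Longrightarrow> xi t \<le> 0"
    using xi_vanishes_before[OF c] by blast
  have "energy 3 c \<le> energy 3 c0"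
  proof (rule DERIV_nonpos_imp_le_Icc[OF _ _ _ continuous_on_energy energy_deriv])
    show "2 * (x t * xi t) * (3 - g t) \<le> 0" if "c0 < t" "t < c" for t
    proof -
      have "xi t \<le> 0" "0 \<le> x t" "g t \<le> 3"
        using c0(4)[of t] x_nonneg[of t] g_bounds[of t] that c0 c t1 by auto
      then have "2 * (x t * xi t) \<le> 0" "0 \<le> 3 - g t"
        using mult_nonneg_nonpos[of "x t" "xi t"] by simp_all
      then show ?thesis
        by (rule mult_nonpos_nonneg)
    qed
  qed (use c0 c t1 in auto)
  have x_c0: "0 \<le> x c0" "x c0 \<le> 2 * s"
    using x_nonneg[of c0] x_le[of c0] c0 c t1 by auto
  have "(xi c)\<^sup>2 + 3 * (x c)\<^sup>2 \<le> 3 * (x c0)\<^sup>2"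
    using \<open>energy 3 c \<le> energy 3 c0\<close> c0(3) by (simp add: energy_def)
  then have "(xi c)\<^sup>2 \<le> 3 * (x c0)\<^sup>2"
    using zero_le_power2[of "x c"] by linarith
  also have "\<dots> \<le> 3 * (2 * s)\<^sup>2"
    using x_c0 by (intro mult_left_mono power_mono) auto
  also have "\<dots> \<le> (4 * s)\<^sup>2"
    using zero_le_power2[of s] by (simp add: power_mult_distrib)
  finally have "(- xi c)\<^sup>2 \<le> (4 * s)\<^sup>2"
    by simp
  then show ?thesis
    using s_pos power2_le_imp_le[of "- xi c" "4 * s"] by simp
qed

lemma drift_bound:
  fixes z :: "real \<Rightarrow> 'a::real_normed_vector"
  assumes z_cont: "continuous_on {0..T} z"
    and z_deriv: "\<And>t. 0 < t \<Longrightarrow> t < T \<Longrightarrow> (z has_vector_derivative (x t)\<^sup>2 *\<^sub>R w t) (at t)"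
    and w_bound: "\<And>t. 0 < t \<Longrightarrow> t < t1 \<Longrightarrow> norm (w t) \<le> B" and "0 \<le> B"
  shows "norm (z t1 - z 0) \<le> 40 * B * s\<^sup>2"
proof (cases "t1 = 0")
  case True
  then show ?thesis
    using \<open>0 \<le> B\<close> by simp
next
  case False
  then have "0 < t1"
    using t1 by simp
  \<comment> \<open>\<open>x\<^sup>2 \<le> 2 s x \<le> 8 s g x = - 8 s \<xi>'\<close>, so the drift is bounded by the decrease of \<open>\<xi>\<close>.\<close>
  have "norm (z t1 - z 0) \<le> - 8 * s * B * xi t1 - - 8 * s * B * xi 0"
  proof (rule differentiable_bound_general[OF \<open>0 < t1\<close>])
    show "continuous_on {0..t1} z"
      using z_cont by (rule continuous_on_subset) (use t1 in auto)
    show "continuous_on {0..t1} (\<lambda>t. - 8 * s * B * xi t)"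
      using continuous_on_subset[OF continuous_on_xi, of "{0..t1}"] t1 by (intro continuous_intros) auto
    fix t assume t: "0 < t" "t < t1"
    show "(z has_vector_derivative (x t)\<^sup>2 *\<^sub>R w t) (at t)"
      using z_deriv t t1 by simp
    show "((\<lambda>t. - 8 * s * B * xi t) has_vector_derivative 8 * s * B * (g t * x t)) (at t)"
      using xi_deriv[of t] t t1 unfolding has_real_derivative_iff_has_vector_derivative[symmetric]
      by (auto intro!: derivative_eq_intros)
    have x: "0 \<le> x t" "x t \<le> 2 * s" and g: "1/4 \<le> g t"
      using x_nonneg[of t] x_le[of t] g_bounds[OF t] t t1 by auto
    have "(x t)\<^sup>2 \<le> 2 * s * x t"
      unfolding power2_eq_square by (rule mult_right_mono[OF x(2,1)])
    also have "\<dots> \<le> 2 * s * (4 * g t * x t)"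
      using mult_right_mono[of 1 "4 * g t" "x t"] x(1) g s_pos by simp
    finally have "(x t)\<^sup>2 * norm (w t) \<le> 2 * s * (4 * g t * x t) * B"
      by (rule mult_mono[OF _ w_bound[OF t] _ norm_ge_zero]) (use x(1) g s_pos in simp)
    then show "norm ((x t)\<^sup>2 *\<^sub>R w t) \<le> 8 * s * B * (g t * x t)"
      by (simp add: algebra_simps)
  qed
  also have "\<dots> = 8 * s * B * (s - xi t1)"
    using xi_0 by (simp add: algebra_simps)
  also have "\<dots> \<le> 8 * s * B * (5 * s)"
    using xi_ge[of t1] t1 s_pos \<open>0 \<le> B\<close> by (intro mult_left_mono) auto
  finally show ?thesis
    by (simp add: power2_eq_square algebra_simps)
qed

end

end

section \<open>Short geodesics\<close>

lemma short_geodesic_x_pos: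
  assumes sg: "short_geodesic h W y0 eta0 s x y xi eta T" and "0 < s" "0 < t" "t < T"
  shows "0 < x t"
proof (rule pos_on_Ioo_if_nonvanishing[of 0 T x s])
  show "continuous_on {0..T} x"
    using sg unfolding short_geodesic_def by (intro DERIV_continuous_on) blast
  show "(x has_real_derivative s) (at 0 within {0..T})"
    using sg unfolding short_geodesic_def by force
qed (use sg assms in \<open>auto simp: short_geodesic_def\<close>)

definition radial_coefficient ::
  "(real \<times> (real^'m) \<Rightarrow> real^'m^'m) \<Rightarrow> real \<Rightarrow> real^'m \<Rightarrow> real^'m \<Rightarrow> real" where
  "radial_coefficient h a y \<eta> = \<eta> \<bullet> (hinv h (a, y) *v \<eta>) + a * (\<eta> \<bullet> (dx_hinv h (a, y) *v \<eta>)) / 2"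

lemma short_geodesic_radial_motion:
  assumes sg: "short_geodesic h W y0 eta0 s x y xi eta T" and "0 < s"
  shows "radial_motion T s x xi (\<lambda>t. radial_coefficient h (x t) (y t) (eta t))"
proof
  note sg' = sg[unfolded short_geodesic_def]
  show "0 < s" "x 0 = 0" "xi 0 = s"
    using sg' \<open>0 < s\<close> by auto
  show "continuous_on {0..T} x" "continuous_on {0..T} xi"
    using sg' by (intro DERIV_continuous_on; blast)+
  fix t
  show "0 \<le> x t" if "0 \<le> t" "t \<le> T"
    using short_geodesic_x_pos[OF sg \<open>0 < s\<close>, of t] sg' that by (cases "t = 0 \<or> t = T") auto
  assume t: "0 < t" "t < T"
  then have at: "at t within {0..T} = at t"
    by (intro at_within_Icc_at)
  show "(x has_real_derivative xi t) (at t)"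
    using sg' t by (force simp flip: at)
  have "(xi has_real_derivative - x t * (eta t \<bullet> (hinv h (x t, y t) *v eta t))
      - 1/2 * (x t)\<^sup>2 * (eta t \<bullet> (dx_hinv h (x t, y t) *v eta t))) (at t)"
    using sg' t by (force simp flip: at)
  then show "(xi has_real_derivative - radial_coefficient h (x t) (y t) (eta t) * x t) (at t)"
    by (rule DERIV_cong) (simp add: radial_coefficient_def power2_eq_square algebra_simps)
qed

lemma short_geodesic_tangential_motion:
  assumes sg: "short_geodesic h W y0 eta0 s x y xi eta T"
  shows "continuous_on {0..T} y" "continuous_on {0..T} eta"
    and "\<And>t. 0 < t \<Longrightarrow> t < T \<Longrightarrow>
      (y has_vector_derivative (x t)\<^sup>2 *\<^sub>R (hinv h (x t, y t) *v eta t)) (at t)"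
    and "\<And>t. 0 < t \<Longrightarrow> t < T \<Longrightarrow>
      (eta has_vector_derivative (x t)\<^sup>2 *\<^sub>R (- (1/2) *\<^sub>R (\<chi> i. eta t \<bullet> (dy_hinv h i (x t, y t) *v eta t)))) (at t)"
proof -
  note sg' = sg[unfolded short_geodesic_def]
  show "continuous_on {0..T} y" "continuous_on {0..T} eta"
    using sg' by (intro continuous_on_vector_derivative; blast)+
  fix t assume t: "0 < t" "t < T"
  then have at: "at t within {0..T} = at t"
    by (intro at_within_Icc_at)
  show "(y has_vector_derivative (x t)\<^sup>2 *\<^sub>R (hinv h (x t, y t) *v eta t)) (at t)"
    using sg' t by (force simp flip: at)
  have eq: "(\<chi> i. - (1/2) * (x t)\<^sup>2 * (eta t \<bullet> (dy_hinv h i (x t, y t) *v eta t)))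
      = (x t)\<^sup>2 *\<^sub>R (- (1/2) *\<^sub>R (\<chi> i. eta t \<bullet> (dy_hinv h i (x t, y t) *v eta t)))"
    by (simp add: vec_eq_iff)
  have "(eta has_vector_derivative
      (\<chi> i. - (1/2) * (x t)\<^sup>2 * (eta t \<bullet> (dy_hinv h i (x t, y t) *v eta t)))) (at t)"
    using sg' t by (force simp flip: at)
  then show "(eta has_vector_derivative
      (x t)\<^sup>2 *\<^sub>R (- (1/2) *\<^sub>R (\<chi> i. eta t \<bullet> (dy_hinv h i (x t, y t) *v eta t)))) (at t)"
    by (simp only: eq)
qed

lemma radial_coefficient_bounds:
  fixes h :: "real \<times> (real^'m) \<Rightarrow> real^'m^'m"
  assumes mf: "metric_family_on h W" and y0: "(0, y0) \<in> W"
    and unit: "eta0 \<bullet> (hinv h (0, y0) *v eta0) = 1"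
  obtains \<rho> B where "0 < \<rho>" "0 < B"
    "\<And>a y \<eta>. \<bar>a\<bar> + norm (y - y0) + norm (\<eta> - eta0) < \<rho> \<Longrightarrow>
      1/4 \<le> radial_coefficient h a y \<eta> \<and> radial_coefficient h a y \<eta> \<le> 3 \<and>
      norm (hinv h (a, y) *v \<eta>) \<le> B \<and> norm (\<chi> i. \<eta> \<bullet> (dy_hinv h i (a, y) *v \<eta>)) \<le> B"
proof -
  obtain B r where "0 < B" "0 < r" and bounds: "\<forall>z. dist z ((0, y0), eta0) < r \<longrightarrow>
    (case z of (p, \<eta>) \<Rightarrow> p \<in> W \<and>
      1/2 \<le> \<eta> \<bullet> (hinv h p *v \<eta>) \<and> \<eta> \<bullet> (hinv h p *v \<eta>) \<le> 2 \<and>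
      \<bar>\<eta> \<bullet> (dx_hinv h p *v \<eta>)\<bar> \<le> B \<and> norm (hinv h p *v \<eta>) \<le> B \<and>
      norm (\<chi> i. \<eta> \<bullet> (dy_hinv h i p *v \<eta>)) \<le> B)"
    using metric_coefficients_locally_bounded[OF mf y0 unit] unfolding eventually_nhds_metric by blast
  define \<rho> where "\<rho> = min r (1 / (2 * B))"
  have \<rho>: "0 < \<rho>" "\<rho> \<le> r" "\<rho> * B \<le> 1/2"
    using \<open>0 < B\<close> \<open>0 < r\<close> by (auto simp: \<rho>_def min_def field_simps)
  have "1/4 \<le> radial_coefficient h a y \<eta> \<and> radial_coefficient h a y \<eta> \<le> 3 \<and>
      norm (hinv h (a, y) *v \<eta>) \<le> B \<and> norm (\<chi> i. \<eta> \<bullet> (dy_hinv h i (a, y) *v \<eta>)) \<le> B"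
    if close: "\<bar>a\<bar> + norm (y - y0) + norm (\<eta> - eta0) < \<rho>" for a y \<eta>
  proof -
    have "dist ((a, y), \<eta>) ((0, y0), eta0) \<le> \<bar>a\<bar> + norm (y - y0) + norm (\<eta> - eta0)"
      using norm_Pair_le[of "(a, y - y0)" "\<eta> - eta0"] norm_Pair_le[of a "y - y0"]
      by (simp add: dist_norm)
    then have b: "1/2 \<le> \<eta> \<bullet> (hinv h (a, y) *v \<eta>)" "\<eta> \<bullet> (hinv h (a, y) *v \<eta>) \<le> 2"
      "\<bar>\<eta> \<bullet> (dx_hinv h (a, y) *v \<eta>)\<bar> \<le> B" "norm (hinv h (a, y) *v \<eta>) \<le> B"
      "norm (\<chi> i. \<eta> \<bullet> (dy_hinv h i (a, y) *v \<eta>)) \<le> B"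
      using bounds[rule_format, of "((a, y), \<eta>)"] close \<rho> by auto
    have "\<bar>a\<bar> \<le> \<rho>"
      using close norm_ge_zero[of "y - y0"] norm_ge_zero[of "\<eta> - eta0"] by linarith
    then have "\<bar>a\<bar> * \<bar>\<eta> \<bullet> (dx_hinv h (a, y) *v \<eta>)\<bar> \<le> \<rho> * B"
      using b(3) \<rho>(1) by (intro mult_mono) auto
    then have "\<bar>a * (\<eta> \<bullet> (dx_hinv h (a, y) *v \<eta>)) / 2\<bar> \<le> 1/4"
      using \<rho>(3) by (simp add: abs_mult)
    then show ?thesis
      using b unfolding radial_coefficient_def by (auto simp: abs_le_iff)
  qed
  then show thesis
    using that \<rho>(1) \<open>0 < B\<close> by blast
qed

lemma short_geodesic_stays_close:
  assumes sg: "short_geodesic h W y0 eta0 s x y xi eta T" and "0 < s"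
    and coefficients: "\<And>a y \<eta>. \<bar>a\<bar> + norm (y - y0) + norm (\<eta> - eta0) < \<rho> \<Longrightarrow>
      1/4 \<le> radial_coefficient h a y \<eta> \<and> radial_coefficient h a y \<eta> \<le> 3 \<and>
      norm (hinv h (a, y) *v \<eta>) \<le> B \<and> norm (\<chi> i. \<eta> \<bullet> (dy_hinv h i (a, y) *v \<eta>)) \<le> B"
    and "0 \<le> B" "2 * s < \<rho> / 3" "40 * B * s\<^sup>2 < \<rho> / 3"
    and t: "0 \<le> t" "t \<le> T"
  shows "\<bar>x t\<bar> + norm (y t - y0) + norm (eta t - eta0) < \<rho>"
proof -
  define g where "g = (\<lambda>t. radial_coefficient h (x t) (y t) (eta t))"
  interpret radial_motion T s x xi g
    unfolding g_def by (rule short_geodesic_radial_motion[OF sg \<open>0 < s\<close>])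
  note tangential = short_geodesic_tangential_motion[OF sg]
  have y_0: "y 0 = y0" and eta_0: "eta 0 = eta0"
    using sg by (auto simp: short_geodesic_def)
  define \<phi> where "\<phi> t = \<bar>x t\<bar> + norm (y t - y0) + norm (eta t - eta0)" for t
  show ?thesis
    unfolding \<phi>_def[symmetric]
  proof (rule bootstrap_Icc[OF _ _ t])
    show "continuous_on {0..T} \<phi>"
      unfolding \<phi>_def using continuous_on_x tangential(1,2) by (intro continuous_intros)
    fix t1 assume t1: "0 \<le> t1" "t1 \<le> T" and before: "\<And>\<tau>. 0 \<le> \<tau> \<Longrightarrow> \<tau> < t1 \<Longrightarrow> \<phi> \<tau> < \<rho>"
    have close: "1/4 \<le> g t \<and> g t \<le> 3 \<and> norm (hinv h (x t, y t) *v eta t) \<le> B \<and>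
        norm (- (1/2) *\<^sub>R (\<chi> i. eta t \<bullet> (dy_hinv h i (x t, y t) *v eta t))) \<le> B"
      if "0 < t" "t < t1" for t
      using coefficients[OF before[of t, unfolded \<phi>_def]] that \<open>0 \<le> B\<close> by (auto simp: g_def)
    then have g_bounds: "1/4 \<le> g t \<and> g t \<le> 3" if "0 < t" "t < t1" for t
      using that by blast
    have "\<bar>x t1\<bar> \<le> 2 * s"
      using x_le[OF t1 g_bounds] x_nonneg[OF t1] t1 by auto
    moreover have "norm (y t1 - y0) \<le> 40 * B * s\<^sup>2"
      using drift_bound[OF t1 g_bounds tangential(1,3)] close \<open>0 \<le> B\<close> y_0 by fastforce
    moreover have "norm (eta t1 - eta0) \<le> 40 * B * s\<^sup>2"
      using drift_bound[OF t1 g_bounds tangential(2,4)] close \<open>0 \<le> B\<close> eta_0 by fastforce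
    ultimately show "\<phi> t1 < \<rho>"
      unfolding \<phi>_def using assms(5,6) by linarith
  qed
qed

lemma short_geodesic_estimates:
  fixes h :: "real \<times> (real^'m) \<Rightarrow> real^'m^'m"
  assumes mf: "metric_family_on h W" and y0: "(0, y0) \<in> W"
    and unit: "eta0 \<bullet> (hinv h (0, y0) *v eta0) = 1"
  shows "\<exists>\<epsilon>>0. \<forall>s\<in>{0<..<\<epsilon>}. \<forall>x y xi eta T. short_geodesic h W y0 eta0 s x y xi eta T \<longrightarrow>
           (\<forall>t\<in>{0<..<T}. deriv xi t < 0) \<and> (\<forall>t\<in>{0..T}. x t \<le> 2 * s)"
proof -
  obtain \<rho> B where "0 < \<rho>" "0 < B" and coefficients: "\<And>a y \<eta>. \<bar>a\<bar> + norm (y - y0) + norm (\<eta> - eta0) < \<rho> \<Longrightarrow>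
      1/4 \<le> radial_coefficient h a y \<eta> \<and> radial_coefficient h a y \<eta> \<le> 3 \<and>
      norm (hinv h (a, y) *v \<eta>) \<le> B \<and> norm (\<chi> i. \<eta> \<bullet> (dy_hinv h i (a, y) *v \<eta>)) \<le> B"
    using radial_coefficient_bounds[OF mf y0 unit] by blast
  define \<epsilon> where "\<epsilon> = min (\<rho> / 6) (min 1 (\<rho> / (120 * B)))"
  have "(\<forall>t\<in>{0<..<T}. deriv xi t < 0) \<and> (\<forall>t\<in>{0..T}. x t \<le> 2 * s)"
    if s: "0 < s" "s < \<epsilon>" and sg: "short_geodesic h W y0 eta0 s x y xi eta T" for s x y xi eta T
  proof -
    define g where "g = (\<lambda>t. radial_coefficient h (x t) (y t) (eta t))"
    interpret radial_motion T s x xi g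
      unfolding g_def by (rule short_geodesic_radial_motion[OF sg \<open>0 < s\<close>])
    have small: "40 * B * s\<^sup>2 \<le> 40 * B * s" "40 * B * s < \<rho> / 3" "2 * s < \<rho> / 3"
      using s \<open>0 < B\<close> by (simp_all add: \<epsilon>_def power2_eq_square field_simps)
    have "\<bar>x t\<bar> + norm (y t - y0) + norm (eta t - eta0) < \<rho>" if "0 \<le> t" "t \<le> T" for t
      by (rule short_geodesic_stays_close[OF sg s(1) _ _ _ _ that])
        (fact coefficients | use small \<open>0 < B\<close> in linarith)+
    then have g_bounds: "1/4 \<le> g t \<and> g t \<le> 3" if "0 \<le> t" "t \<le> T" for t
      using coefficients that unfolding g_def by blast
    have "deriv xi t < 0" if "0 < t" "t < T" for t
    proof -
      have "deriv xi t = - g t * x t"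
        using xi_deriv[OF that] by (rule DERIV_imp_deriv)
      moreover have "1/4 \<le> g t" "0 < x t"
        using g_bounds[of t] short_geodesic_x_pos[OF sg \<open>0 < s\<close> that] that by auto
      ultimately show ?thesis
        by (simp add: mult_pos_pos)
    qed
    moreover have "x t \<le> 2 * s" if "0 \<le> t" "t \<le> T" for t
      using x_le[OF that, of t] g_bounds that by auto
    ultimately show ?thesis
      by auto
  qed
  moreover have "0 < \<epsilon>"
    using \<open>0 < \<rho>\<close> \<open>0 < B\<close> by (simp add: \<epsilon>_def)
  ultimately show ?thesis
    by (intro exI[of _ \<epsilon>]) auto
qed

theorem lemma5p2:
  fixes h :: "real \<times> (real^'m) \<Rightarrow> real^'m^'m"
    and W :: "(real \<times> (real^'m)) set"
    and K :: "(real^'m) set"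
  assumes "open W"
    and "metric_family_on h W"
    and "compact K"
    and "\<forall>y\<in>K. (0, y) \<in> W"
  shows "\<exists>C>0. \<forall>y0\<in>K. \<forall>eta0. eta0 \<bullet> (hinv h (0, y0) *v eta0) = 1 \<longrightarrow>
           (\<exists>\<epsilon>>0. \<forall>s\<in>{0<..<\<epsilon>}. \<forall>x y xi eta T.
              short_geodesic h W y0 eta0 s x y xi eta T \<longrightarrow>
                (\<forall>t\<in>{0<..<T}. deriv xi t < 0) \<and> (\<forall>t\<in>{0..T}. x t \<le> C * s))"
  using short_geodesic_estimates[OF assms(2)] assms(4) by (intro exI[of _ 2]) auto

end
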